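(* Let $G$ be a bipartite graph and let $X$ be a vertex parameter. Then the token sliding $X$-reconfiguration graph $\mathcal{R}^{\mathrm{TS}}_X(G)$ is bipartite.
   Context: All graphs are finite and simple. A graph parameter $X$ is a vertex parameter if there is a property $x$ of vertex subsets such that for every graph $G$, $X(G)$ equals either (for every graph) the maximum, or (for every graph) the minimum, of $|B|$ over all $B\subseteq V(G)$ having property $x$ in $G$. The token sliding $X$-reconfiguration graph $\mathcal{R}^{\mathrm{TS}}_X(G)$ has as vertices all sets $S\subseteq V(G)$ with $|S|=X(G)$ having property $x$ in $G$; two such sets $S_1,S_2$ are adjacent iff there exist $v_1\in S_1\setminus S_2$, $v_2\in S_2\setminus S_1$ with $S_1\setminus\{v_1\}=S_2\setminus\{v_2\}$ and $v_1v_2\in E(G)$. *)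

theory Defs
  imports Main
begin

definition simple_graph :: "'a set \<Rightarrow> 'a set set \<Rightarrow> bool" where
  "simple_graph V E \<longleftrightarrow> finite V \<and>
     (\<forall>e\<in>E. \<exists>u v. e = {u, v} \<and> u \<noteq> v \<and> u \<in> V \<and> v \<in> V)"

definition bipartite :: "'a set \<Rightarrow> 'a set set \<Rightarrow> bool" where
  "bipartite V E \<longleftrightarrow> (\<exists>A B. A \<union> B = V \<and> A \<inter> B = {} \<and>
     (\<forall>e\<in>E. \<exists>a\<in>A. \<exists>b\<in>B. e = {a, b}))"

definition vertex_parameter ::
  "('a set \<Rightarrow> 'a set set \<Rightarrow> nat) \<Rightarrow> ('a set \<Rightarrow> 'a set set \<Rightarrow> 'a set \<Rightarrow> bool) \<Rightarrow> bool" where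
  "vertex_parameter X P \<longleftrightarrow>
     (\<forall>V E. simple_graph V E \<longrightarrow> X V E = Max {card B | B. B \<subseteq> V \<and> P V E B}) \<or>
     (\<forall>V E. simple_graph V E \<longrightarrow> X V E = Min {card B | B. B \<subseteq> V \<and> P V E B})"

definition TS_vertices ::
  "('a set \<Rightarrow> 'a set set \<Rightarrow> nat) \<Rightarrow> ('a set \<Rightarrow> 'a set set \<Rightarrow> 'a set \<Rightarrow> bool)
   \<Rightarrow> 'a set \<Rightarrow> 'a set set \<Rightarrow> 'a set set" where
  "TS_vertices X P V E = {S. S \<subseteq> V \<and> card S = X V E \<and> P V E S}"

definition TS_edges ::
  "('a set \<Rightarrow> 'a set set \<Rightarrow> nat) \<Rightarrow> ('a set \<Rightarrow> 'a set set \<Rightarrow> 'a set \<Rightarrow> bool)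
   \<Rightarrow> 'a set \<Rightarrow> 'a set set \<Rightarrow> 'a set set set" where
  "TS_edges X P V E = {{S1, S2} | S1 S2. S1 \<in> TS_vertices X P V E \<and> S2 \<in> TS_vertices X P V E \<and>
     (\<exists>v1 v2. v1 \<in> S1 - S2 \<and> v2 \<in> S2 - S1 \<and> S1 - {v1} = S2 - {v2} \<and> {v1, v2} \<in> E)}"

end

theory Submission
  imports Defs
begin

text \<open>Sliding a token along an edge of a bipartite graph with sides A and B moves it from
  one side to the other, so it changes the number of tokens on A by exactly one. Hence the
  parity of that number properly 2-colours the token sliding graph.\<close>

lemma bipartiteI_crossing:
  assumes "\<And>e. e \<in> E \<Longrightarrow> \<exists>u\<in>V. \<exists>v\<in>V. e = {u, v} \<and> Q u \<and> \<not> Q v"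
  shows "bipartite V E"
  unfolding bipartite_def
  by (rule exI[of _ "{x \<in> V. Q x}"], rule exI[of _ "{x \<in> V. \<not> Q x}"]) (use assms in blast)

lemma bipartite_edge_crosses:
  assumes "A \<inter> B = {}" "\<forall>e\<in>E. \<exists>a\<in>A. \<exists>b\<in>B. e = {a, b}" "{u, v} \<in> E"
  shows "u \<in> A \<longleftrightarrow> v \<notin> A"
proof -
  obtain a b where "a \<in> A" "b \<in> B" "{u, v} = {a, b}"
    using assms(2,3) by blast
  with assms(1) show ?thesis
    by (auto simp: doubleton_eq_iff)
qed

lemma card_Int_remove:
  assumes "finite S" "v \<in> S"
  shows "card (S \<inter> A) = card ((S - {v}) \<inter> A) + of_bool (v \<in> A)"
proof (cases "v \<in> A")
  case True
  then have "S \<inter> A = insert v ((S - {v}) \<inter> A)"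
    using assms(2) by blast
  with True assms(1) show ?thesis
    by simp
next
  case False
  then have "S \<inter> A = (S - {v}) \<inter> A"
    by blast
  with False show ?thesis
    by simp
qed

lemma token_slide_flips_parity:
  assumes "finite S1" "finite S2" "v1 \<in> S1" "v2 \<in> S2" "S1 - {v1} = S2 - {v2}"
    and "v1 \<in> A \<longleftrightarrow> v2 \<notin> A"
  shows "even (card (S1 \<inter> A)) \<longleftrightarrow> odd (card (S2 \<inter> A))"
  using card_Int_remove[OF assms(1,3), of A] card_Int_remove[OF assms(2,4), of A] assms(5,6)
  by (cases "v1 \<in> A") auto

theorem theorem2p16:
  fixes V :: "'a set" and E :: "'a set set"
    and X :: "'a set \<Rightarrow> 'a set set \<Rightarrow> nat"
    and P :: "'a set \<Rightarrow> 'a set set \<Rightarrow> 'a set \<Rightarrow> bool"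
  assumes "simple_graph V E"
    and "bipartite V E"
    and "vertex_parameter X P"
  shows "bipartite (TS_vertices X P V E) (TS_edges X P V E)"
proof -
  obtain A B where parts: "A \<inter> B = {}" "\<forall>e\<in>E. \<exists>a\<in>A. \<exists>b\<in>B. e = {a, b}"
    using assms(2) by (auto simp: bipartite_def)
  have "finite V"
    using assms(1) by (simp add: simple_graph_def)
  then have finite_tokens: "finite S" if "S \<in> TS_vertices X P V E" for S
    using that by (auto simp: TS_vertices_def intro: finite_subset)
  show ?thesis
  proof (rule bipartiteI_crossing[where Q = "\<lambda>S. even (card (S \<inter> A))"])
    fix e
    assume "e \<in> TS_edges X P V E"
    then obtain S1 S2 v1 v2 where e: "e = {S1, S2}"
        and S12: "S1 \<in> TS_vertices X P V E" "S2 \<in> TS_vertices X P V E"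
        and slide: "v1 \<in> S1 - S2" "v2 \<in> S2 - S1" "S1 - {v1} = S2 - {v2}" "{v1, v2} \<in> E"
      unfolding TS_edges_def by blast
    have "even (card (S1 \<inter> A)) \<longleftrightarrow> odd (card (S2 \<inter> A))"
      using token_slide_flips_parity[OF finite_tokens[OF S12(1)] finite_tokens[OF S12(2)]]
        slide bipartite_edge_crosses[OF parts slide(4)] by blast
    with e S12 show "\<exists>S\<in>TS_vertices X P V E. \<exists>T\<in>TS_vertices X P V E.
        e = {S, T} \<and> even (card (S \<inter> A)) \<and> \<not> even (card (T \<inter> A))"
      by (metis insert_commute)
  qed
qed

end
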